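(* Fix $B>1$ and $H>0$, and let $$x(s)=\frac1H\sqrt{1+B^2+2B\sin\!\big(Hs+\tfrac{3\pi}{2}\big)},\qquad z(s)=\int_{3\pi/(2H)}^{\,s+3\pi/(2H)}\frac{1+B\sin(Ht)}{\sqrt{1+B^2+2B\sin(Ht)}}\,dt ,$$ $g(s)=x(s)-\frac{x'(s)}{z'(s)}z(s)$, all considered on $I_0=(-r_0,r_0)$, where $r_0$ is the smallest positive value with $z'(r_0)=0$. Then there exists $\bar r\in(0,r_0)$ with $g(\bar r)=g(-\bar r)=0$, and for all $r\in[-\bar r,\bar r]$ we have $g(r)\ge0$, $x''(r)>0$ and $x'(r)z(r)\le0$. In particular, with $R_0^2=x(\bar r)^2+z(\bar r)^2$, the surface $\Sigma$ obtained by rotating $\beta|_{[-\bar r,\bar r]}$, $\beta=(x,0,z)$, about the $z$-axis is a free boundary CMC surface in the ball $\mathbb B^3_{R_0}$ of radius $R_0$ centered at the origin and satisfies at every point $$|\Phi|^2\langle\vec x,N\rangle^2\le\tfrac12\big(2+H_\Sigma\langle\vec x,N\rangle\big)^2,$$ where $N=(-z'\cos\theta,-z'\sin\theta,x')$ at $(x(s)\cos\theta,x(s)\sin\theta,z(s))$ and $H_\Sigma$ is the (constant) mean curvature of $\Sigma$ with respect to $N$.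
   Context: For $B>1$, rotating $\beta$ about the $z$-axis gives a Delaunay nodoid (an immersed surface of revolution of constant mean curvature); $\beta$ is parametrized by arc length. Free boundary in a ball $\mathbb B^3_{R}$: interior in the open ball, boundary on the sphere of radius $R$, meeting it orthogonally. Conventions: shape operator $A$ w.r.t. $N$ defined by $\langle A(Y),Z\rangle=\langle\bar\nabla_YZ,N\rangle$; mean curvature $=\operatorname{tr}A$ (unnormalized); $\Phi=\Pi-\frac{H_\Sigma}2g_\Sigma$, $|\Phi|^2=|A|^2-H_\Sigma^2/2$; $\vec x$ the position vector. *)

theory Defs
  imports "HOL-Analysis.Analysis"
begin

definition oint :: "real \<Rightarrow> real \<Rightarrow> (real \<Rightarrow> real) \<Rightarrow> real" where
  "oint a b f = (if a \<le> b then integral {a..b} f else - integral {b..a} f)"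

definition d_s :: "(real \<Rightarrow> real \<Rightarrow> real^3) \<Rightarrow> real \<Rightarrow> real \<Rightarrow> real^3" where
  "d_s Y s t = vector_derivative (\<lambda>u. Y u t) (at s)"

definition d_t :: "(real \<Rightarrow> real \<Rightarrow> real^3) \<Rightarrow> real \<Rightarrow> real \<Rightarrow> real^3" where
  "d_t Y s t = vector_derivative (\<lambda>u. Y s u) (at t)"

definition fE where "fE X s t = d_s X s t \<bullet> d_s X s t"
definition fF where "fF X s t = d_s X s t \<bullet> d_t X s t"
definition fG where "fG X s t = d_t X s t \<bullet> d_t X s t"

text \<open>Second fundamental form w.r.t. normal Nv, convention II(Y,Z) = <D_Y Z, N>.\<close>
definition sL where "sL X Nv s t = d_s (d_s X) s t \<bullet> Nv s t"
definition sM where "sM X Nv s t = d_t (d_s X) s t \<bullet> Nv s t"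
definition sN where "sN X Nv s t = d_t (d_t X) s t \<bullet> Nv s t"

text \<open>Shape operator matrix S = I^{-1} II (entries).\<close>
definition shape :: "(real \<Rightarrow> real \<Rightarrow> real^3) \<Rightarrow> (real \<Rightarrow> real \<Rightarrow> real^3) \<Rightarrow> real \<Rightarrow> real \<Rightarrow> real \<times> real \<times> real \<times> real" where
  "shape X Nv s t =
     (let E = fE X s t; F = fF X s t; G = fG X s t;
          L = sL X Nv s t; M = sM X Nv s t; N = sN X Nv s t;
          D = E * G - F\<^sup>2
      in ((G * L - F * M) / D, (G * M - F * N) / D,
          (E * M - F * L) / D, (E * N - F * M) / D))"

text \<open>Unnormalized mean curvature = trace of the shape operator.\<close>
definition mean_curv where
  "mean_curv X Nv s t = (case shape X Nv s t of (a, b, c, d) \<Rightarrow> a + d)"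

text \<open>|A|^2 = trace(S^2).\<close>
definition normA2 where
  "normA2 X Nv s t = (case shape X Nv s t of (a, b, c, d) \<Rightarrow> a\<^sup>2 + 2 * b * c + d\<^sup>2)"

definition normPhi2 where
  "normPhi2 X Nv s t = normA2 X Nv s t - (mean_curv X Nv s t)\<^sup>2 / 2"

definition free_boundary_CMC_in_ball ::
  "(real \<Rightarrow> real \<Rightarrow> real^3) \<Rightarrow> (real \<Rightarrow> real \<Rightarrow> real^3) \<Rightarrow> real \<Rightarrow> real \<Rightarrow> real \<Rightarrow> bool" where
  "free_boundary_CMC_in_ball X Nv a b R \<longleftrightarrow>
     a < b \<and> 0 < R \<and>
     (\<forall>s\<in>{a..b}. \<forall>t.
        (\<lambda>u. X u t) differentiable (at s) \<and> (\<lambda>u. X s u) differentiable (at t) \<and>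
        (\<lambda>u. d_s X u t) differentiable (at s) \<and> (\<lambda>u. d_s X s u) differentiable (at t) \<and>
        (\<lambda>u. d_t X s u) differentiable (at t) \<and>
        fE X s t * fG X s t - (fF X s t)\<^sup>2 > 0 \<and>
        norm (Nv s t) = 1 \<and> Nv s t \<bullet> d_s X s t = 0 \<and> Nv s t \<bullet> d_t X s t = 0) \<and>
     (\<forall>s\<in>{a<..<b}. \<forall>t. norm (X s t) < R) \<and>
     (\<forall>s\<in>{a, b}. \<forall>t. norm (X s t) = R \<and> X s t \<bullet> Nv s t = 0) \<and>
     (\<exists>Hc. \<forall>s\<in>{a..b}. \<forall>t. mean_curv X Nv s t = Hc)"

end

theory Submission
  imports Defs
begin

text \<open>
  The profile \<open>(x, z)\<close> has unit speed, and its meridian curvature \<open>x' z'' - z' x''\<close> and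
  parallel curvature \<open>z'/x\<close> add up to \<open>H\<close>; so the surface of revolution has constant mean
  curvature \<open>H\<close> and \<open>|\<Phi>|\<^sup>2 = (H - 2 z'/x)\<^sup>2/2\<close>. Up to the first zero \<open>r\<^sub>0\<close> of \<open>z'\<close> we
  have \<open>z' < 0\<close>, i.e. \<open>B cos (H s) > 1\<close>, which forces \<open>x'' > 0\<close>; hence \<open>x'\<close> and \<open>-z\<close> have
  the sign of \<open>s\<close>. The even function \<open>g\<close>, with \<open>\<langle>X, N\<rangle> = -z' g\<close>, is positive at \<open>0\<close> and
  negative near \<open>r\<^sub>0\<close>, where \<open>z' \<rightarrow> 0\<close> while \<open>x' z\<close> stays negative; its first positive zero
  is \<open>r\<^sub>b\<close>. On \<open>[-r\<^sub>b, r\<^sub>b]\<close> the distance \<open>|X|\<close> grows with \<open>|s|\<close>, so the cap lies in the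
  ball of radius \<open>|X(r\<^sub>b)|\<close> and meets its boundary orthogonally. Finally, with
  \<open>p = \<langle>X, N\<rangle> \<ge> 0\<close> and \<open>k = z'/x < 0\<close>, the estimate is the factorisation
  \<open>(2 + Hp)\<^sup>2 - ((H - 2k) p)\<^sup>2 = (2 + 2kp)(2 + 2Hp - 2kp)\<close>, where \<open>1 + kp = x'\<^sup>2 + z' x' z / x \<ge> 0\<close>.
\<close>

lemma vector3_eq_scaleR_sum:
  "(vector [a, b, c] :: real^3) = a *\<^sub>R vector [1, 0, 0] + b *\<^sub>R vector [0, 1, 0] + c *\<^sub>R vector [0, 0, 1]"
  by (simp add: vec_eq_iff forall_3)

lemma has_vector_derivative_vector3:
  assumes "(f has_real_derivative f') (at s)" "(g has_real_derivative g') (at s)"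
    and "(h has_real_derivative h') (at s)"
  shows "((\<lambda>u. vector [f u, g u, h u] :: real^3) has_vector_derivative vector [f', g', h']) (at s)"
proof -
  have "((\<lambda>u. f u *\<^sub>R (vector [1, 0, 0] :: real^3) + g u *\<^sub>R vector [0, 1, 0] + h u *\<^sub>R vector [0, 0, 1])
      has_vector_derivative
        f s *\<^sub>R 0 + f' *\<^sub>R vector [1, 0, 0] + (g s *\<^sub>R 0 + g' *\<^sub>R vector [0, 1, 0])
        + (h s *\<^sub>R 0 + h' *\<^sub>R vector [0, 0, 1])) (at s)"
    by (intro derivative_intros assms)
  then show ?thesis by (simp add: vector3_eq_scaleR_sum[symmetric])
qed

lemma inner_vector3: "(vector [a, b, c] :: real^3) \<bullet> vector [d, e, f] = a * d + b * e + c * f"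
  by (simp add: inner_vec_def sum_3)

lemma norm_vector3: "norm (vector [a, b, c] :: real^3) = sqrt (a\<^sup>2 + b\<^sup>2 + c\<^sup>2)"
  by (simp add: norm_eq_sqrt_inner inner_vector3 power2_eq_square)

lemma oint_eq_integral_diff:
  assumes f: "continuous_on UNIV f" and m: "m \<le> a" "m \<le> y"
  shows "oint a y f = integral {m..y} f - integral {m..a} f"
proof -
  have int: "f integrable_on {u..v}" for u v
    by (rule integrable_continuous_interval) (rule continuous_on_subset[OF f subset_UNIV])
  show ?thesis
  proof (cases "a \<le> y")
    case True
    then show ?thesis
      using Henstock_Kurzweil_Integration.integral_combine[OF m(1) True int] by (simp add: oint_def)
  next
    case False
    then show ?thesis
      using Henstock_Kurzweil_Integration.integral_combine[OF m(2) _ int, of a] by (simp add: oint_def)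
  qed
qed

lemma oint_has_real_derivative:
  assumes f: "continuous_on UNIV f"
  shows "((\<lambda>y. oint a y f) has_real_derivative f y) (at y)"
proof -
  define m where "m = min a y - 1"
  have "((\<lambda>t. integral {m..t} f) has_real_derivative f y) (at y within {m..y + 1})"
    by (rule integral_has_real_derivative[OF continuous_on_subset[OF f subset_UNIV]])
       (simp add: m_def)
  moreover have "y \<in> interior {m..y + 1}"
    unfolding interior_atLeastAtMost_real m_def by simp
  ultimately have "((\<lambda>t. integral {m..t} f) has_real_derivative f y) (at y)"
    by (metis at_within_interior)
  then have "((\<lambda>t. integral {m..t} f - integral {m..a} f) has_real_derivative f y) (at y)"
    using DERIV_diff[OF _ DERIV_const] by fastforce
  then show ?thesis
  proof (rule has_field_derivative_transform_within_open[where S = "{m<..}"])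
    show "integral {m..t} f - integral {m..a} f = oint a t f" if "t \<in> {m<..}" for t
      using oint_eq_integral_diff[OF f, of m a t] that by (simp add: m_def)
  qed (simp_all add: m_def)
qed

locale unit_speed_profile =
  fixes x z x' z' x'' z'' :: "real \<Rightarrow> real"
  assumes x_deriv: "\<And>s. (x has_real_derivative x' s) (at s)"
    and z_deriv: "\<And>s. (z has_real_derivative z' s) (at s)"
    and x'_deriv: "\<And>s. (x' has_real_derivative x'' s) (at s)"
    and z'_deriv: "\<And>s. (z' has_real_derivative z'' s) (at s)"
    and unit_speed: "\<And>s. (x' s)\<^sup>2 + (z' s)\<^sup>2 = 1"
    and x_pos: "\<And>s. 0 < x s"
begin

lemma isCont_profile: "isCont x s" "isCont z s" "isCont x' s" "isCont z' s"
  using x_deriv z_deriv x'_deriv z'_deriv by (blast intro: DERIV_isCont)+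

lemma continuous_on_profile:
  "continuous_on S x" "continuous_on S z" "continuous_on S x'" "continuous_on S z'"
  by (intro continuous_at_imp_continuous_on ballI isCont_profile)+

definition rot :: "real \<Rightarrow> real \<Rightarrow> real^3" where
  "rot s t = vector [x s * cos t, x s * sin t, z s]"

definition normal :: "real \<Rightarrow> real \<Rightarrow> real^3" where
  "normal s t = vector [- z' s * cos t, - z' s * sin t, x' s]"

definition meridian_curvature :: "real \<Rightarrow> real" where
  "meridian_curvature s = x' s * z'' s - z' s * x'' s"

definition parallel_curvature :: "real \<Rightarrow> real" where
  "parallel_curvature s = z' s / x s"

lemma rot_deriv_s:
  "((\<lambda>u. rot u t) has_vector_derivative vector [x' s * cos t, x' s * sin t, z' s]) (at s)"
  unfolding rot_def by (intro has_vector_derivative_vector3 DERIV_cmult_right x_deriv z_deriv)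

lemma rot_deriv_t:
  "((\<lambda>u. rot s u) has_vector_derivative vector [x s * - sin t, x s * cos t, 0]) (at t)"
  unfolding rot_def
  by (intro has_vector_derivative_vector3 DERIV_cmult DERIV_sin DERIV_cos DERIV_const DERIV_minus)

lemma d_s_rot: "d_s rot = (\<lambda>s t. vector [x' s * cos t, x' s * sin t, z' s])"
  unfolding d_s_def by (intro ext vector_derivative_at rot_deriv_s)

lemma d_t_rot: "d_t rot = (\<lambda>s t. vector [x s * - sin t, x s * cos t, 0])"
  unfolding d_t_def by (intro ext vector_derivative_at rot_deriv_t)

lemma d_s_rot_deriv_s:
  "((\<lambda>u. d_s rot u t) has_vector_derivative vector [x'' s * cos t, x'' s * sin t, z'' s]) (at s)"
  unfolding d_s_rot by (intro has_vector_derivative_vector3 DERIV_cmult_right x'_deriv z'_deriv)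

lemma d_s_rot_deriv_t:
  "((\<lambda>u. d_s rot s u) has_vector_derivative vector [x' s * - sin t, x' s * cos t, 0]) (at t)"
  unfolding d_s_rot by (intro has_vector_derivative_vector3 DERIV_cmult DERIV_sin DERIV_cos DERIV_const DERIV_minus)

lemma d_t_rot_deriv_t:
  "((\<lambda>u. d_t rot s u) has_vector_derivative vector [x s * - cos t, x s * - sin t, 0]) (at t)"
  unfolding d_t_rot by (intro has_vector_derivative_vector3 DERIV_cmult DERIV_sin DERIV_cos DERIV_const DERIV_minus)

lemma first_fundamental_form_rot:
  "fE rot s t = 1" "fF rot s t = 0" "fG rot s t = (x s)\<^sup>2"
proof -
  show "fE rot s t = 1"
    unfolding fE_def d_s_rot inner_vector3 using sin_cos_squared_add[of t] unit_speed[of s] by algebra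
  show "fF rot s t = 0"
    unfolding fF_def d_s_rot d_t_rot inner_vector3 by algebra
  show "fG rot s t = (x s)\<^sup>2"
    unfolding fG_def d_t_rot inner_vector3 using sin_cos_squared_add[of t] by algebra
qed

lemma shape_rot:
  "shape rot normal s t = (meridian_curvature s, 0, 0, parallel_curvature s)"
proof -
  have d_ss: "d_s (d_s rot) s t = vector [x'' s * cos t, x'' s * sin t, z'' s]"
    unfolding d_s_def[of "d_s rot"] by (rule vector_derivative_at[OF d_s_rot_deriv_s])
  have d_ts: "d_t (d_s rot) s t = vector [x' s * - sin t, x' s * cos t, 0]"
    unfolding d_t_def[of "d_s rot"] by (rule vector_derivative_at[OF d_s_rot_deriv_t])
  have d_tt: "d_t (d_t rot) s t = vector [x s * - cos t, x s * - sin t, 0]"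
    unfolding d_t_def[of "d_t rot"] by (rule vector_derivative_at[OF d_t_rot_deriv_t])
  have trig: "(sin t)\<^sup>2 + (cos t)\<^sup>2 = 1"
    by simp
  have "sL rot normal s t = meridian_curvature s"
    unfolding sL_def d_ss normal_def inner_vector3 meridian_curvature_def using trig by algebra
  moreover have "sM rot normal s t = 0"
    unfolding sM_def d_ts normal_def inner_vector3 by algebra
  moreover have "sN rot normal s t = x s * z' s"
    unfolding sN_def d_tt normal_def inner_vector3 using trig by algebra
  ultimately show ?thesis
    using x_pos[of s] first_fundamental_form_rot
    by (simp add: shape_def parallel_curvature_def power2_eq_square)
qed

lemma mean_curv_rot: "mean_curv rot normal s t = meridian_curvature s + parallel_curvature s"
  by (simp add: mean_curv_def shape_rot)

lemma normPhi2_rot: "normPhi2 rot normal s t = (meridian_curvature s - parallel_curvature s)\<^sup>2 / 2"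
  by (simp add: normPhi2_def normA2_def mean_curv_rot shape_rot power2_eq_square algebra_simps)

lemma norm_rot: "norm (rot s t) = sqrt ((x s)\<^sup>2 + (z s)\<^sup>2)"
proof -
  have "(x s * cos t)\<^sup>2 + (x s * sin t)\<^sup>2 = (x s)\<^sup>2"
    using sin_cos_squared_add[of t] by algebra
  then show ?thesis
    by (simp add: rot_def norm_vector3)
qed

lemma inner_rot_normal: "rot s t \<bullet> normal s t = z s * x' s - x s * z' s"
  unfolding rot_def normal_def inner_vector3 using sin_cos_squared_add[of t] by algebra

lemma immersion_rot:
  "(\<lambda>u. rot u t) differentiable (at s) \<and> (\<lambda>u. rot s u) differentiable (at t) \<and>
   (\<lambda>u. d_s rot u t) differentiable (at s) \<and> (\<lambda>u. d_s rot s u) differentiable (at t) \<and>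
   (\<lambda>u. d_t rot s u) differentiable (at t) \<and>
   fE rot s t * fG rot s t - (fF rot s t)\<^sup>2 > 0 \<and>
   norm (normal s t) = 1 \<and> normal s t \<bullet> d_s rot s t = 0 \<and> normal s t \<bullet> d_t rot s t = 0"
proof -
  have trig: "(sin t)\<^sup>2 + (cos t)\<^sup>2 = 1"
    by simp
  have "(- z' s * cos t)\<^sup>2 + (- z' s * sin t)\<^sup>2 + (x' s)\<^sup>2 = 1"
    using trig unit_speed[of s] by algebra
  moreover have "normal s t \<bullet> d_s rot s t = 0"
    unfolding normal_def d_s_rot inner_vector3 using trig by algebra
  moreover have "normal s t \<bullet> d_t rot s t = 0"
    unfolding normal_def d_t_rot inner_vector3 by algebra
  ultimately show ?thesis
    using x_pos[of s] first_fundamental_form_rot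
      differentiableI_vector[OF rot_deriv_s] differentiableI_vector[OF rot_deriv_t]
      differentiableI_vector[OF d_s_rot_deriv_s] differentiableI_vector[OF d_s_rot_deriv_t]
      differentiableI_vector[OF d_t_rot_deriv_t]
    by (simp add: normal_def norm_vector3)
qed

lemma free_boundary_CMC_in_ball_rot:
  assumes "a < b" "0 < R"
    and interior: "\<And>s. a < s \<Longrightarrow> s < b \<Longrightarrow> (x s)\<^sup>2 + (z s)\<^sup>2 < R\<^sup>2"
    and sphere: "\<And>s. s \<in> {a, b} \<Longrightarrow> (x s)\<^sup>2 + (z s)\<^sup>2 = R\<^sup>2"
    and orthogonal: "\<And>s. s \<in> {a, b} \<Longrightarrow> z s * x' s = x s * z' s"
    and cmc: "\<And>s. s \<in> {a..b} \<Longrightarrow> meridian_curvature s + parallel_curvature s = Hc"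
  shows "free_boundary_CMC_in_ball rot normal a b R"
proof -
  have "norm (rot s t) < R" if "a < s" "s < b" for s t
    using real_sqrt_less_mono[OF interior[OF that]] \<open>0 < R\<close> by (simp add: norm_rot)
  moreover have "norm (rot s t) = R \<and> rot s t \<bullet> normal s t = 0" if "s \<in> {a, b}" for s t
    using sphere[OF that] orthogonal[OF that] \<open>0 < R\<close> by (simp add: norm_rot inner_rot_normal)
  ultimately show ?thesis
    unfolding free_boundary_CMC_in_ball_def using assms immersion_rot
    by (auto simp: mean_curv_rot)
qed

end

lemma pinching_inequality:
  fixes H k p :: real
  assumes "0 \<le> H * p" "k * p \<le> 0" "0 \<le> 1 + k * p"
  shows "(H - 2 * k)\<^sup>2 / 2 * p\<^sup>2 \<le> 1 / 2 * (2 + H * p)\<^sup>2"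
proof -
  have "(2 + H * p)\<^sup>2 - ((H - 2 * k) * p)\<^sup>2 = (2 + 2 * (k * p)) * (2 + 2 * (H * p) - 2 * (k * p))"
    by algebra
  also have "\<dots> \<ge> 0"
    using assms by (intro mult_nonneg_nonneg) linarith+
  finally show ?thesis
    by (simp add: power_mult_distrib)
qed

lemma sin_add_3pi_half: "sin (y + 3 * pi / 2) = - cos y"
proof -
  have "sin (y + 3 * pi / 2) = sin ((y + pi / 2) + pi)"
    by (simp add: algebra_simps)
  also have "\<dots> = - cos y"
    by (simp only: sin_periodic_pi) (simp add: sin_add)
  finally show ?thesis .
qed

locale nodoid =
  fixes B H :: real
  assumes B_gt_1: "1 < B" and H_pos: "0 < H"
begin

definition Q :: "real \<Rightarrow> real" where
  "Q s = 1 + B\<^sup>2 - 2 * B * cos (H * s)"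

definition x :: "real \<Rightarrow> real" where
  "x s = sqrt (Q s) / H"

definition z :: "real \<Rightarrow> real" where
  "z s = oint (3 * pi / (2 * H)) (s + 3 * pi / (2 * H))
           (\<lambda>t. (1 + B * sin (H * t)) / sqrt (1 + B\<^sup>2 + 2 * B * sin (H * t)))"

definition x' :: "real \<Rightarrow> real" where
  "x' s = B * sin (H * s) / sqrt (Q s)"

definition z' :: "real \<Rightarrow> real" where
  "z' s = (1 - B * cos (H * s)) / sqrt (Q s)"

definition x'' :: "real \<Rightarrow> real" where
  "x'' s = B * H * (B * cos (H * s) - 1) * (B - cos (H * s)) / (Q s * sqrt (Q s))"

definition z'' :: "real \<Rightarrow> real" where
  "z'' s = B\<^sup>2 * H * sin (H * s) * (B - cos (H * s)) / (Q s * sqrt (Q s))"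

lemma Q_bounds: "(B - 1)\<^sup>2 \<le> Q s" "Q s \<le> (B + 1)\<^sup>2"
proof -
  have "B * - 1 \<le> B * cos (H * s)" "B * cos (H * s) \<le> B * 1"
    using B_gt_1 by (intro mult_left_mono; simp)+
  then show "(B - 1)\<^sup>2 \<le> Q s" "Q s \<le> (B + 1)\<^sup>2"
    unfolding Q_def power2_eq_square by (simp_all add: algebra_simps)
qed

lemma Q_pos: "0 < Q s"
  using Q_bounds(1)[of s] B_gt_1 by (smt (verit) zero_less_power)

lemma Q_even: "Q (- s) = Q s"
  by (simp add: Q_def)

lemma x_eq: "x s = 1 / H * sqrt (1 + B\<^sup>2 + 2 * B * sin (H * s + 3 * pi / 2))"
  by (simp add: x_def Q_def sin_add_3pi_half)

lemma sqrt_Q_deriv: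
  "((\<lambda>s. sqrt (Q s)) has_real_derivative B * H * sin (H * s) / sqrt (Q s)) (at s)"
proof -
  have "(Q has_real_derivative 2 * B * H * sin (H * s)) (at s)"
    unfolding Q_def[abs_def] by (auto intro!: derivative_eq_intros)
  from DERIV_chain2[OF DERIV_real_sqrt[OF Q_pos] this]
  show ?thesis
    by (simp add: field_simps)
qed

lemma x_deriv: "(x has_real_derivative x' s) (at s)"
proof -
  have "(x has_real_derivative B * H * sin (H * s) / sqrt (Q s) / H) (at s)"
    unfolding x_def[abs_def] by (rule DERIV_cdivide[OF sqrt_Q_deriv])
  then show ?thesis
    using H_pos by (simp add: x'_def)
qed

lemma x'_deriv: "(x' has_real_derivative x'' s) (at s)"
proof -
  define r where "r = sqrt (Q s)"
  have r: "0 < r" "r\<^sup>2 = Q s"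
    using Q_pos[of s] by (auto simp: r_def)
  have "(x' has_real_derivative
      (B * H * cos (H * s) * r - B * sin (H * s) * (B * H * sin (H * s) / r)) / (r * r)) (at s)"
    unfolding x'_def[abs_def] r_def
    by (rule DERIV_divide[OF _ sqrt_Q_deriv]) (use Q_pos[of s] in \<open>auto intro!: derivative_eq_intros\<close>)
  moreover have "(B * H * cos (H * s) * r - B * sin (H * s) * (B * H * sin (H * s) / r)) / (r * r)
      = B * H * (cos (H * s) * r\<^sup>2 - B * (sin (H * s))\<^sup>2) / (r\<^sup>2 * r)"
    using r by (simp add: field_simps power2_eq_square)
  moreover have "cos (H * s) * r\<^sup>2 - B * (sin (H * s))\<^sup>2 = (B * cos (H * s) - 1) * (B - cos (H * s))"
    unfolding r Q_def using sin_squared_eq[of "H * s"] by algebra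
  moreover have "x'' s = B * H * (B * cos (H * s) - 1) * (B - cos (H * s)) / (r\<^sup>2 * r)"
    by (simp add: x''_def r r_def less_imp_le[OF Q_pos])
  ultimately show ?thesis
    by (simp add: ac_simps)
qed

lemma z'_deriv: "(z' has_real_derivative z'' s) (at s)"
proof -
  define r where "r = sqrt (Q s)"
  have r: "0 < r" "r\<^sup>2 = Q s"
    using Q_pos[of s] by (auto simp: r_def)
  have "(z' has_real_derivative
      (B * H * sin (H * s) * r - (1 - B * cos (H * s)) * (B * H * sin (H * s) / r)) / (r * r)) (at s)"
    unfolding z'_def[abs_def] r_def
    by (rule DERIV_divide[OF _ sqrt_Q_deriv]) (use Q_pos[of s] in \<open>auto intro!: derivative_eq_intros\<close>)
  moreover have "(B * H * sin (H * s) * r - (1 - B * cos (H * s)) * (B * H * sin (H * s) / r)) / (r * r)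
      = B * H * sin (H * s) * (r\<^sup>2 - (1 - B * cos (H * s))) / (r\<^sup>2 * r)"
    using r by (simp add: field_simps power2_eq_square)
  moreover have "r\<^sup>2 - (1 - B * cos (H * s)) = B * (B - cos (H * s))"
    unfolding r Q_def by algebra
  moreover have "z'' s = B\<^sup>2 * H * sin (H * s) * (B - cos (H * s)) / (r\<^sup>2 * r)"
    by (simp add: z''_def r r_def less_imp_le[OF Q_pos])
  ultimately show ?thesis
    by (simp add: power2_eq_square ac_simps)
qed

lemma z_deriv: "(z has_real_derivative z' s) (at s)"
proof -
  define f where "f t = (1 + B * sin (H * t)) / sqrt (1 + B\<^sup>2 + 2 * B * sin (H * t))" for t
  have f_shift: "f (u + 3 * pi / (2 * H)) = z' u" for u
  proof -
    have "H * (u + 3 * pi / (2 * H)) = H * u + 3 * pi / 2"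
      using H_pos by (simp add: field_simps)
    then show ?thesis
      by (simp add: f_def z'_def Q_def sin_add_3pi_half)
  qed
  have "0 < 1 + B\<^sup>2 + 2 * B * sin (H * t)" for t
  proof -
    have "B * - 1 \<le> B * sin (H * t)"
      using B_gt_1 by (intro mult_left_mono) simp_all
    then have "(B - 1)\<^sup>2 \<le> 1 + B\<^sup>2 + 2 * B * sin (H * t)"
      by (simp add: power2_eq_square algebra_simps)
    then show ?thesis
      using B_gt_1 by (smt (verit) zero_less_power)
  qed
  then have "continuous_on UNIV f"
    unfolding f_def by (intro continuous_intros) (simp add: less_imp_neq[symmetric])
  from DERIV_chain2[OF oint_has_real_derivative[OF this], of "\<lambda>u. u + 3 * pi / (2 * H)" 1 s]
  have "((\<lambda>u. oint (3 * pi / (2 * H)) (u + 3 * pi / (2 * H)) f) has_real_derivative z' s) (at s)"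
    by (simp add: f_shift DERIV_add[OF DERIV_ident DERIV_const, simplified])
  then show ?thesis
    by (simp add: z_def[abs_def] f_def[abs_def])
qed

lemma unit_speed: "(x' s)\<^sup>2 + (z' s)\<^sup>2 = 1"
proof -
  have "(B * sin (H * s))\<^sup>2 + (1 - B * cos (H * s))\<^sup>2 = Q s"
    unfolding Q_def using sin_cos_squared_add[of "H * s"] by algebra
  then show ?thesis
    using Q_pos[of s] by (simp add: x'_def z'_def power_divide add_divide_distrib[symmetric])
qed

lemma x_pos: "0 < x s"
  using Q_pos[of s] H_pos by (simp add: x_def)

lemma unit_speed_profile: "unit_speed_profile x z x' z' x'' z''"
  using x_deriv z_deriv x'_deriv z'_deriv unit_speed x_pos by unfold_locales

sublocale unit_speed_profile x z x' z' x'' z''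
  by (fact unit_speed_profile)

lemma deriv_profile: "deriv x = x'" "deriv z = z'" "deriv x' = x''"
  using DERIV_imp_deriv[OF x_deriv] DERIV_imp_deriv[OF z_deriv] DERIV_imp_deriv[OF x'_deriv] by auto

lemma mean_curvature_eq: "meridian_curvature s + parallel_curvature s = H"
proof -
  define r c sn where "r = sqrt (Q s)" and "c = cos (H * s)" and "sn = sin (H * s)"
  have r: "0 < r" "r\<^sup>2 = 1 + B\<^sup>2 - 2 * B * c"
    using Q_pos[of s] by (auto simp: r_def c_def Q_def)
  have sc: "sn\<^sup>2 + c\<^sup>2 = 1"
    by (simp add: c_def sn_def)
  have "meridian_curvature s + parallel_curvature s
      = (B * sn * (B\<^sup>2 * H * sn * (B - c)) - (1 - B * c) * (B * H * (B * c - 1) * (B - c)))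
          / (r\<^sup>2 * r\<^sup>2) + H * (1 - B * c) / r\<^sup>2"
  proof -
    have "Q s = r\<^sup>2"
      using Q_pos[of s] by (simp add: r_def)
    then have e: "z' s = (1 - B * c) / r" "x' s = B * sn / r" "x s = r / H"
      "x'' s = B * H * (B * c - 1) * (B - c) / (r\<^sup>2 * r)"
      "z'' s = B\<^sup>2 * H * sn * (B - c) / (r\<^sup>2 * r)"
      by (simp_all add: z'_def x'_def x_def x''_def z''_def r_def c_def sn_def)
    show ?thesis
      unfolding meridian_curvature_def parallel_curvature_def e
      using r(1) H_pos by (simp add: field_simps power2_eq_square)
  qed
  also have "\<dots> = H * (B * (B - c) * ((1 - B * c)\<^sup>2 + B\<^sup>2 * sn\<^sup>2) / (r\<^sup>2 * r\<^sup>2) + (1 - B * c) / r\<^sup>2)"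
    by (simp add: field_simps power2_eq_square)
  also have "(1 - B * c)\<^sup>2 + B\<^sup>2 * sn\<^sup>2 = r\<^sup>2"
    using sc r(2) by algebra
  also have "B * (B - c) * r\<^sup>2 / (r\<^sup>2 * r\<^sup>2) + (1 - B * c) / r\<^sup>2 = (B * (B - c) + (1 - B * c)) / r\<^sup>2"
    using r(1) by (simp add: field_simps power2_eq_square)
  also have "B * (B - c) + (1 - B * c) = r\<^sup>2"
    using r(2) by algebra
  finally show ?thesis
    using r(1) by simp
qed

lemma x_even: "x (- s) = x s"
  by (simp add: x_def Q_even)

lemma x'_odd: "x' (- s) = - x' s"
  by (simp add: x'_def Q_even)

lemma z'_even: "z' (- s) = z' s"
  by (simp add: z'_def Q_even)

lemma z_0: "z 0 = 0"
  by (simp add: z_def oint_def)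

lemma z_odd: "z (- s) = - z s"
proof -
  have "((\<lambda>u. z (- u) + z u) has_real_derivative 0) (at u)" for u
    using DERIV_add[OF DERIV_chain2[OF z_deriv DERIV_minus[OF DERIV_ident]] z_deriv]
    by (simp add: z'_even)
  from DERIV_isconst_all[OF allI[OF this], of s 0] show ?thesis
    by (simp add: z_0)
qed

lemma x'_0: "x' 0 = 0"
  by (simp add: x'_def)

lemma z'_0: "z' 0 = - 1"
proof -
  have "Q 0 = (B - 1)\<^sup>2"
    by (simp add: Q_def power2_eq_square algebra_simps)
  then show ?thesis
    using B_gt_1 by (simp add: z'_def divide_eq_minus_1_iff)
qed

lemma z'_neg_iff: "z' s < 0 \<longleftrightarrow> 1 < B * cos (H * s)"
  using Q_pos[of s] by (simp add: z'_def divide_less_0_iff)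

lemma x''_pos:
  assumes "1 < B * cos (H * s)"
  shows "0 < x'' s"
proof -
  have "0 < B - cos (H * s)"
    using B_gt_1 cos_le_one[of "H * s"] by linarith
  then show ?thesis
    using assms B_gt_1 H_pos Q_pos[of s] by (simp add: x''_def)
qed

lemma x_le: "x s \<le> (B + 1) / H"
  using H_pos B_gt_1 real_sqrt_le_mono[OF Q_bounds(2)[of s]] by (simp add: x_def divide_right_mono)

definition g :: "real \<Rightarrow> real" where
  "g s = x s - x' s / z' s * z s"

lemma g_even: "g (- s) = g s"
  by (simp add: g_def x_even x'_odd z'_even z_odd)

lemma inner_rot_normal_eq_g: "z' s \<noteq> 0 \<Longrightarrow> rot s t \<bullet> normal s t = - z' s * g s"
  by (simp add: inner_rot_normal g_def field_simps)

end

locale nodoid_arc = nodoid +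
  fixes r0 :: real
  assumes r0_pos: "0 < r0" and z'_r0: "z' r0 = 0"
    and z'_nonzero: "\<And>r. 0 < r \<Longrightarrow> r < r0 \<Longrightarrow> z' r \<noteq> 0"
begin

lemma z'_neg:
  assumes "\<bar>s\<bar> < r0"
  shows "z' s < 0"
proof -
  have "z' \<bar>s\<bar> < 0"
  proof (rule ccontr)
    assume "\<not> z' \<bar>s\<bar> < 0"
    then obtain t where t: "0 \<le> t" "t \<le> \<bar>s\<bar>" "z' t = 0"
      using IVT[of z' 0 0 "\<bar>s\<bar>"] z'_0 isCont_profile(4) by fastforce
    then have "t \<noteq> 0"
      using z'_0 by auto
    then show False
      using z'_nonzero[of t] t assms by auto
  qed
  then show ?thesis
    by (cases "0 \<le> s") (auto simp: z'_even[of s, symmetric])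
qed

lemma x''_pos_on_arc: "\<bar>s\<bar> < r0 \<Longrightarrow> 0 < x'' s"
  using z'_neg z'_neg_iff x''_pos by blast

lemma x'_pos:
  assumes "0 < s" "s \<le> r0"
  shows "0 < x' s"
proof -
  have "x' 0 < x' s"
  proof (rule DERIV_pos_imp_increasing_open[OF assms(1) _ continuous_on_profile(3)])
    show "\<exists>d. (x' has_real_derivative d) (at u) \<and> 0 < d" if "0 < u" "u < s" for u
      using x'_deriv x''_pos_on_arc[of u] that assms by auto
  qed
  then show ?thesis
    by (simp add: x'_0)
qed

lemma z_neg:
  assumes "0 < s" "s \<le> r0"
  shows "z s < 0"
proof -
  have "z s < z 0"
  proof (rule DERIV_neg_imp_decreasing_open[OF assms(1) _ continuous_on_profile(2)])
    show "\<exists>d. (z has_real_derivative d) (at u) \<and> d < 0" if "0 < u" "u < s" for u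
      using z_deriv z'_neg[of u] that assms by auto
  qed
  then show ?thesis
    by (simp add: z_0)
qed

lemma x'_mult_z_nonpos:
  assumes "\<bar>s\<bar> \<le> r0"
  shows "x' s * z s \<le> 0"
proof -
  have "x' \<bar>s\<bar> * z \<bar>s\<bar> \<le> 0"
    using x'_pos[of "\<bar>s\<bar>"] z_neg[of "\<bar>s\<bar>"] assms
    by (cases "s = 0") (auto simp: x'_0 mult_pos_neg less_imp_le)
  then show ?thesis
    by (cases "0 \<le> s") (auto simp: x'_odd z_odd)
qed

lemma isCont_g: "\<bar>s\<bar> < r0 \<Longrightarrow> isCont g s"
  unfolding g_def[abs_def] using z'_neg[of s]
  by (intro continuous_intros isCont_profile) auto

lemma g_0_pos: "0 < g 0"
  using x_pos[of 0] by (simp add: g_def x'_0)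

text \<open>Near \<open>r\<^sub>0\<close> the quotient \<open>x' z / z'\<close> exceeds the bound \<open>(B + 1)/H\<close> on \<open>x\<close>, since
  \<open>z' \<rightarrow> 0\<^sup>-\<close> while \<open>x' z\<close> stays below a negative constant.\<close>

lemma g_neg_near_r0: "\<exists>r1. 0 < r1 \<and> r1 < r0 \<and> g r1 < 0"
proof -
  define c where "c = x' r0 * z r0"
  have c: "c < 0"
    unfolding c_def using x'_pos[OF r0_pos order_refl] z_neg[OF r0_pos order_refl]
    by (simp add: mult_pos_neg)
  define K where "K = (B + 1) / H"
  have K: "0 < K"
    using B_gt_1 H_pos by (simp add: K_def)
  have "((\<lambda>s. x' s * z s) \<longlongrightarrow> c) (at_left r0)"
    unfolding c_def using isCont_profile(2,3)
    by (intro tendsto_intros) (simp_all add: isCont_def filterlim_at_split)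
  then have near_c: "\<forall>\<^sub>F s in at_left r0. x' s * z s < c / 2"
    by (rule order_tendstoD(2)) (use c in simp)
  have "(z' \<longlongrightarrow> 0) (at_left r0)"
    using isCont_profile(4)[of r0] z'_r0 by (simp add: isCont_def filterlim_at_split)
  then have near_0: "\<forall>\<^sub>F s in at_left r0. c / (2 * K) < z' s"
    by (rule order_tendstoD(1)) (use c K in \<open>simp add: divide_neg_pos\<close>)
  have "\<forall>\<^sub>F s in at_left r0. 0 < s \<and> s < r0 \<and> x' s * z s < c / 2 \<and> c / (2 * K) < z' s"
    using eventually_at_left_real[OF r0_pos] near_c near_0 by eventually_elim auto
  then obtain s where s: "0 < s" "s < r0" "x' s * z s < c / 2" "c / (2 * K) < z' s"
    using eventually_happens'[of "at_left r0"] trivial_limit_at_left_real by blast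
  have "x' s * z s < K * z' s"
    using s(3) mult_strict_left_mono[OF s(4) K] K by simp
  then have "K < x' s * z s / z' s"
    using z'_neg[of s] s by (simp add: less_divide_eq)
  moreover have "x s \<le> K"
    unfolding K_def by (rule x_le)
  ultimately show ?thesis
    using s by (auto simp: g_def)
qed

text \<open>The first positive zero of \<open>g\<close> is the infimum of the closed set where \<open>g \<le> 0\<close>.\<close>

lemma first_zero_g: "\<exists>rb. 0 < rb \<and> rb < r0 \<and> g rb = 0 \<and> (\<forall>s. 0 \<le> s \<and> s < rb \<longrightarrow> 0 < g s)"
proof -
  obtain r1 where r1: "0 < r1" "r1 < r0" "g r1 < 0"
    using g_neg_near_r0 by blast
  have cont: "continuous_on {0..r1} g"
    using r1 by (intro continuous_at_imp_continuous_on ballI isCont_g) auto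
  define S where "S = {0..r1} \<inter> g -` {..0}"
  have "closed S"
    unfolding S_def by (rule continuous_closed_preimage[OF cont]) auto
  moreover have "r1 \<in> S" "bdd_below S"
    using r1 by (auto simp: S_def intro: bdd_belowI[of _ 0])
  ultimately have rb: "Inf S \<in> S"
    by (intro closed_contains_Inf) auto
  have pos: "0 < g s" if "0 \<le> s" "s < Inf S" for s
    using that rb cInf_lower[OF _ \<open>bdd_below S\<close>, of s] by (force simp: S_def)
  have "g (Inf S) = 0"
  proof (rule ccontr)
    assume "g (Inf S) \<noteq> 0"
    then obtain t where t: "0 \<le> t" "t \<le> Inf S" "g t = 0"
      using IVT2[of g "Inf S" 0 0] rb g_0_pos isCont_g r1 by (fastforce simp: S_def)
    then show False
      using pos[of t] \<open>g (Inf S) \<noteq> 0\<close> by (cases "t = Inf S") auto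
  qed
  moreover have "Inf S \<noteq> 0"
    using g_0_pos calculation by auto
  ultimately show ?thesis
    using rb r1 pos by (intro exI[of _ "Inf S"]) (auto simp: S_def)
qed

end

locale nodoid_cap = nodoid_arc +
  fixes rb :: real
  assumes rb_pos: "0 < rb" and rb_less_r0: "rb < r0" and g_rb: "g rb = 0"
    and g_pos: "\<And>s. 0 \<le> s \<Longrightarrow> s < rb \<Longrightarrow> 0 < g s"
begin

lemma g_nonneg: "\<bar>s\<bar> \<le> rb \<Longrightarrow> 0 \<le> g s"
  using g_pos[of "\<bar>s\<bar>"] g_rb g_even[of s]
  by (cases "\<bar>s\<bar> = rb"; cases "0 \<le> s") (auto simp: abs_if split: if_splits)

lemma inner_rot_normal_nonneg: "\<bar>s\<bar> \<le> rb \<Longrightarrow> 0 \<le> rot s t \<bullet> normal s t"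
  using z'_neg[of s] g_nonneg[of s] rb_less_r0
  by (simp add: inner_rot_normal_eq_g mult_nonpos_nonneg)

lemma sq_dist_less:
  assumes "\<bar>s\<bar> < rb"
  shows "(x s)\<^sup>2 + (z s)\<^sup>2 < (x rb)\<^sup>2 + (z rb)\<^sup>2"
proof -
  have "(x \<bar>s\<bar>)\<^sup>2 + (z \<bar>s\<bar>)\<^sup>2 < (x rb)\<^sup>2 + (z rb)\<^sup>2"
  proof (rule DERIV_pos_imp_increasing_open[OF assms])
    fix u assume u: "\<bar>s\<bar> < u" "u < rb"
    have "((\<lambda>u. (x u)\<^sup>2 + (z u)\<^sup>2) has_real_derivative 2 * (x u * x' u) + 2 * (z u * z' u)) (at u)"
      by (auto intro!: derivative_eq_intros x_deriv z_deriv)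
    moreover have "0 < x u * x' u" "0 < z u * z' u"
      using x_pos[of u] x'_pos[of u] z_neg[of u] z'_neg[of u] u rb_less_r0
      by (auto intro: mult_pos_pos mult_neg_neg)
    ultimately show "\<exists>d. ((\<lambda>u. (x u)\<^sup>2 + (z u)\<^sup>2) has_real_derivative d) (at u) \<and> 0 < d"
      by (intro exI[of _ "2 * (x u * x' u) + 2 * (z u * z' u)"]) auto
  qed (intro continuous_intros continuous_on_profile)
  then show ?thesis
    by (cases "0 \<le> s") (auto simp: x_even z_odd)
qed

lemma free_boundary_cap:
  "free_boundary_CMC_in_ball rot normal (- rb) rb (sqrt ((x rb)\<^sup>2 + (z rb)\<^sup>2))"
proof (rule free_boundary_CMC_in_ball_rot)
  show "0 < sqrt ((x rb)\<^sup>2 + (z rb)\<^sup>2)"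
    using x_pos[of rb] by (simp add: add_pos_nonneg)
  show "z s * x' s = x s * z' s" if "s \<in> {- rb, rb}" for s
  proof -
    have "\<bar>s\<bar> < r0" "g s = 0"
      using that rb_pos rb_less_r0 g_rb g_even[of rb] by auto
    then show ?thesis
      using inner_rot_normal_eq_g[of s 0] inner_rot_normal[of s 0] z'_neg[of s] by auto
  qed
qed (use rb_pos sq_dist_less x_even z_odd mean_curvature_eq in auto)

lemma Phi_pinching:
  assumes "\<bar>s\<bar> \<le> rb"
  shows "normPhi2 rot normal s t * (rot s t \<bullet> normal s t)\<^sup>2
    \<le> 1 / 2 * (2 + mean_curv rot normal s t * (rot s t \<bullet> normal s t))\<^sup>2"
proof -
  define k p where "k = parallel_curvature s" and "p = rot s t \<bullet> normal s t"
  have "0 \<le> p"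
    unfolding p_def using inner_rot_normal_nonneg[OF assms] .
  moreover have "k < 0"
    unfolding k_def parallel_curvature_def using z'_neg[of s] x_pos[of s] assms rb_less_r0
    by (simp add: divide_neg_pos)
  moreover have "1 + k * p = (x' s)\<^sup>2 + z' s * (x' s * z s) / x s"
  proof -
    have "1 + k * p = (x' s)\<^sup>2 + (z' s)\<^sup>2 + k * p"
      by (simp add: unit_speed)
    also have "\<dots> = (x' s)\<^sup>2 + z' s * (x' s * z s) / x s"
      unfolding k_def p_def parallel_curvature_def inner_rot_normal
      using x_pos[of s] by (simp add: field_simps power2_eq_square)
    finally show ?thesis .
  qed
  moreover have "0 \<le> z' s * (x' s * z s)"
    using z'_neg[of s] x'_mult_z_nonpos[of s] assms rb_less_r0 by (simp add: mult_nonpos_nonpos)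
  moreover have "meridian_curvature s - parallel_curvature s = H - 2 * k"
    using mean_curvature_eq[of s] by (simp add: k_def)
  ultimately show ?thesis
    using pinching_inequality[of H p k] H_pos x_pos[of s]
    by (simp add: normPhi2_rot mean_curv_rot mean_curvature_eq mult_nonpos_nonneg p_def)
qed

end

theorem (in nodoid_arc) free_boundary_cap_exists:
  "\<exists>rb. 0 < rb \<and> rb < r0 \<and> g rb = 0 \<and> g (- rb) = 0 \<and>
     (\<forall>r\<in>{- rb..rb}. 0 \<le> g r \<and> 0 < x'' r \<and> x' r * z r \<le> 0) \<and>
     free_boundary_CMC_in_ball rot normal (- rb) rb (sqrt ((x rb)\<^sup>2 + (z rb)\<^sup>2)) \<and>
     (\<forall>s\<in>{- rb..rb}. \<forall>t. normPhi2 rot normal s t * (rot s t \<bullet> normal s t)\<^sup>2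
        \<le> 1 / 2 * (2 + mean_curv rot normal s t * (rot s t \<bullet> normal s t))\<^sup>2)"
proof -
  obtain rb where rb: "0 < rb" "rb < r0" "g rb = 0" "\<And>s. 0 \<le> s \<Longrightarrow> s < rb \<Longrightarrow> 0 < g s"
    using first_zero_g by blast
  then interpret nodoid_cap B H r0 rb
    by unfold_locales
  show ?thesis
    using rb g_even g_nonneg x''_pos_on_arc x'_mult_z_nonpos free_boundary_cap Phi_pinching
    by (intro exI[of _ rb]) auto
qed

theorem proposition3p6:
  fixes B H r0 :: real and x z g :: "real \<Rightarrow> real"
    and X Nv :: "real \<Rightarrow> real \<Rightarrow> real^3"
  assumes B: "B > 1" and H: "H > 0"
    and x_def: "\<And>s. x s = (1 / H) * sqrt (1 + B\<^sup>2 + 2 * B * sin (H * s + 3 * pi / 2))"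
    and z_def: "\<And>s. z s = oint (3 * pi / (2 * H)) (s + 3 * pi / (2 * H))
                   (\<lambda>t. (1 + B * sin (H * t)) / sqrt (1 + B\<^sup>2 + 2 * B * sin (H * t)))"
    and g_def: "\<And>s. g s = x s - deriv x s / deriv z s * z s"
    and r0: "r0 > 0" "deriv z r0 = 0" "\<And>r. 0 < r \<Longrightarrow> r < r0 \<Longrightarrow> deriv z r \<noteq> 0"
    and X_def: "\<And>s t. X s t = vector [x s * cos t, x s * sin t, z s]"
    and N_def: "\<And>s t. Nv s t = vector [- deriv z s * cos t, - deriv z s * sin t, deriv x s]"
  shows "\<exists>rb. 0 < rb \<and> rb < r0 \<and> g rb = 0 \<and> g (- rb) = 0 \<and>
           (\<forall>r\<in>{- rb..rb}. g r \<ge> 0 \<and> deriv (deriv x) r > 0 \<and> deriv x r * z r \<le> 0) \<and>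
           (let R0 = sqrt ((x rb)\<^sup>2 + (z rb)\<^sup>2) in
              free_boundary_CMC_in_ball X Nv (- rb) rb R0 \<and>
              (\<forall>s\<in>{- rb..rb}. \<forall>t.
                 normPhi2 X Nv s t * (X s t \<bullet> Nv s t)\<^sup>2
                   \<le> (1 / 2) * (2 + mean_curv X Nv s t * (X s t \<bullet> Nv s t))\<^sup>2))"
proof -
  have nodoid: "nodoid B H"
    using B H by unfold_locales
  have x: "x = nodoid.x B H" and z: "z = nodoid.z B H"
    using x_def z_def nodoid.x_eq[OF nodoid] by (auto simp: nodoid.z_def[OF nodoid])
  note deriv = nodoid.deriv_profile[OF nodoid]
  note profile = nodoid.unit_speed_profile[OF nodoid]
  have "nodoid_arc B H r0"
    using nodoid r0 by (simp add: nodoid_arc_def nodoid_arc_axioms_def deriv x z)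
  moreover have "g = nodoid.g B H"
    by (rule ext) (simp add: g_def nodoid.g_def[OF nodoid] deriv x z)
  moreover have "X = unit_speed_profile.rot x z" "Nv = unit_speed_profile.normal (deriv x) (deriv z)"
    by (simp_all add: fun_eq_iff X_def N_def x z deriv
        unit_speed_profile.rot_def[OF profile] unit_speed_profile.normal_def[OF profile])
  ultimately show ?thesis
    using nodoid_arc.free_boundary_cap_exists by (simp add: Let_def deriv x z)
qed

end
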